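(* Let $G$ be a finite group, $p$ a prime, and $B_0$ the principal $p$-block of $G$. Let $\chi, \psi \in \mathrm{Irr}(B_0)$ with $p \nmid \chi(1)$ and suppose that the product $\chi\psi$ is irreducible. Then $\chi\psi \in \mathrm{Irr}(B_0)$. *)

theory Defs
  imports "HOL-Algebra.Group" "Jordan_Normal_Form.Matrix" "HOL-Computational_Algebra.Polynomial"
begin

definition is_rep :: "('a, 'b) monoid_scheme \<Rightarrow> nat \<Rightarrow> ('a \<Rightarrow> complex mat) \<Rightarrow> bool" where
  "is_rep G n \<rho> \<longleftrightarrow>
     (\<forall>g\<in>carrier G. \<rho> g \<in> carrier_mat n n) \<and>
     \<rho> \<one>\<^bsub>G\<^esub> = 1\<^sub>m n \<and>
     (\<forall>g\<in>carrier G. \<forall>h\<in>carrier G. \<rho> (g \<otimes>\<^bsub>G\<^esub> h) = \<rho> g * \<rho> h)"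

definition invariant_subspace :: "('a, 'b) monoid_scheme \<Rightarrow> nat \<Rightarrow> ('a \<Rightarrow> complex mat) \<Rightarrow> complex vec set \<Rightarrow> bool" where
  "invariant_subspace G n \<rho> W \<longleftrightarrow>
     W \<subseteq> carrier_vec n \<and> 0\<^sub>v n \<in> W \<and>
     (\<forall>v\<in>W. \<forall>w\<in>W. v + w \<in> W) \<and>
     (\<forall>c. \<forall>v\<in>W. c \<cdot>\<^sub>v v \<in> W) \<and>
     (\<forall>g\<in>carrier G. \<forall>w\<in>W. \<rho> g *\<^sub>v w \<in> W)"

definition irreducible_rep :: "('a, 'b) monoid_scheme \<Rightarrow> nat \<Rightarrow> ('a \<Rightarrow> complex mat) \<Rightarrow> bool" where
  "irreducible_rep G n \<rho> \<longleftrightarrow> n > 0 \<and> is_rep G n \<rho> \<and>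
     (\<forall>W. invariant_subspace G n \<rho> W \<longrightarrow> W = {0\<^sub>v n} \<or> W = carrier_vec n)"

definition mat_trace :: "complex mat \<Rightarrow> complex" where
  "mat_trace A = (\<Sum>i<dim_row A. A $$ (i, i))"

definition irr_char :: "('a, 'b) monoid_scheme \<Rightarrow> ('a \<Rightarrow> complex) \<Rightarrow> bool" where
  "irr_char G \<chi> \<longleftrightarrow> (\<exists>n \<rho>. irreducible_rep G n \<rho> \<and>
      (\<forall>g\<in>carrier G. \<chi> g = mat_trace (\<rho> g)) \<and> (\<forall>g. g \<notin> carrier G \<longrightarrow> \<chi> g = 0))"

definition conj_class :: "('a, 'b) monoid_scheme \<Rightarrow> 'a \<Rightarrow> 'a set" where
  "conj_class G g = {x \<otimes>\<^bsub>G\<^esub> g \<otimes>\<^bsub>G\<^esub> inv\<^bsub>G\<^esub> x | x. x \<in> carrier G}"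

definition alg_int_ideal :: "complex set \<Rightarrow> bool" where
  "alg_int_ideal I \<longleftrightarrow> I \<subseteq> {z. algebraic_int z} \<and> 0 \<in> I \<and>
     (\<forall>x\<in>I. \<forall>y\<in>I. x + y \<in> I) \<and> (\<forall>x\<in>I. - x \<in> I) \<and>
     (\<forall>r. algebraic_int r \<longrightarrow> (\<forall>x\<in>I. r * x \<in> I))"

definition max_ideal_over :: "nat \<Rightarrow> complex set \<Rightarrow> bool" where
  "max_ideal_over p P \<longleftrightarrow> alg_int_ideal P \<and> of_nat p \<in> P \<and> 1 \<notin> P \<and>
     (\<forall>J. alg_int_ideal J \<and> P \<subseteq> J \<longrightarrow> J = P \<or> 1 \<in> J)"

text \<open>Principal p-block (w.r.t. the maximal ideal P): the central character
  omega_chi(K^+) = |K| chi(g)/chi(1) is congruent mod P to omega_1(K^+) = |K|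
  for every conjugacy class K = class of g.\<close>
definition in_principal_block :: "('a, 'b) monoid_scheme \<Rightarrow> complex set \<Rightarrow> ('a \<Rightarrow> complex) \<Rightarrow> bool" where
  "in_principal_block G P \<chi> \<longleftrightarrow> irr_char G \<chi> \<and>
     (\<forall>g\<in>carrier G. of_nat (card (conj_class G g)) * \<chi> g / \<chi> \<one>\<^bsub>G\<^esub>
                      - of_nat (card (conj_class G g)) \<in> P)"

end

theory Submission
  imports Defs "Jordan_Normal_Form.Schur_Decomposition" "HOL-Algebra.Multiplicative_Group"
begin

(*
  Write \<omega>\<^sub>\<chi>(K) = |K| \<chi>(g) / \<chi>(1) for the central character of \<chi> at the class K of g.
  It is an algebraic integer: by Schur's lemma the class sum of K acts as the scalar \<omega>\<^sub>\<chi>(K)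
  in an irreducible representation, and this scalar is an eigenvalue of an integer matrix.
  Since \<omega>\<^sub>\<chi>\<^sub>\<psi>(K) = \<chi>(g) \<omega>\<^sub>\<psi>(K) / \<chi>(1),
    \<chi>(1) (\<omega>\<^sub>\<chi>\<^sub>\<psi>(K) - |K|) = \<chi>(g) (\<omega>\<^sub>\<psi>(K) - |K|) + \<chi>(1) (\<omega>\<^sub>\<chi>(K) - |K|),
  which lies in P because \<chi> and \<psi> lie in the principal block and \<chi>(g) is an algebraic integer.
  As \<chi>(1) is prime to p \<in> P, the algebraic integer \<omega>\<^sub>\<chi>\<^sub>\<psi>(K) - |K| lies in P itself.
*)

section \<open>Algebraic integers as eigenvalues of integer matrices\<close>

lemma algebraic_int_if_int_eigenvalue:
  fixes M :: "'i \<Rightarrow> 'i \<Rightarrow> int" and w :: "'i \<Rightarrow> 'a :: field_char_0"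
  assumes fin: "finite I" and i0: "i0 \<in> I" "w i0 \<noteq> 0"
    and eq: "\<And>i. i \<in> I \<Longrightarrow> (\<Sum>j\<in>I. of_int (M i j) * w j) = x * w i"
  shows "algebraic_int x"
proof -
  define n where "n = card I"
  obtain f where f: "bij_betw f {0..<n} I" using ex_bij_betw_nat_finite[OF fin] n_def by blast
  define A :: "int mat" where "A = mat n n (\<lambda>(i,j). M (f i) (f j))"
  define Ac :: "'a mat" where "Ac = map_mat of_int A"
  define v where "v = vec n (\<lambda>i. w (f i))"
  have A: "A \<in> carrier_mat n n" and Ac: "Ac \<in> carrier_mat n n"
    unfolding Ac_def A_def by simp_all
  obtain k where k: "k < n" "f k = i0" using f i0 unfolding bij_betw_def by auto
  have v: "v \<in> carrier_vec n" "v \<noteq> 0\<^sub>v n"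
    using k i0 unfolding v_def by (auto dest!: arg_cong[of _ _ "\<lambda>u. u $ k"])
  have "Ac *\<^sub>v v = x \<cdot>\<^sub>v v"
  proof (rule eq_vecI)
    fix i assume "i < dim_vec (x \<cdot>\<^sub>v v)"
    hence i: "i < n" using v by simp
    have "(Ac *\<^sub>v v) $ i = (\<Sum>j<n. of_int (M (f i) (f j)) * w (f j))"
      using i unfolding Ac_def A_def v_def
      by (auto simp add: mult_mat_vec_def scalar_prod_def lessThan_atLeast0 intro!: sum.cong)
    also have "\<dots> = (\<Sum>j\<in>I. of_int (M (f i) j) * w j)"
      using sum.reindex_bij_betw[OF f, of "\<lambda>j. of_int (M (f i) j) * w j"]
      by (simp add: lessThan_atLeast0)
    also have "\<dots> = x * w (f i)" using eq[of "f i"] i f unfolding bij_betw_def by auto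
    finally show "(Ac *\<^sub>v v) $ i = (x \<cdot>\<^sub>v v) $ i" using i unfolding v_def by simp
  qed (use v Ac in simp)
  hence "eigenvalue Ac x"
    unfolding eigenvalue_def eigenvector_def using v Ac by auto
  hence "poly (char_poly Ac) x = 0" using eigenvalue_root_char_poly[OF Ac] by simp
  moreover have "char_poly Ac = map_poly of_int (char_poly A)"
    unfolding Ac_def by (rule of_int_hom.char_poly_hom[OF A])
  moreover have "lead_coeff (char_poly A) = 1" using degree_monic_char_poly[OF A] by simp
  ultimately show ?thesis unfolding algebraic_int_altdef_ipoly by metis
qed

text \<open>Via the companion matrix of a monic integer polynomial.\<close>
lemma algebraic_int_imp_int_eigenvalue:
  fixes x :: "'a :: field_char_0"
  assumes "algebraic_int x"
  obtains I :: "nat set" and i0 w and M :: "nat \<Rightarrow> nat \<Rightarrow> int"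
  where "finite I" "i0 \<in> I" "w i0 \<noteq> 0"
    "\<And>i. i \<in> I \<Longrightarrow> (\<Sum>j\<in>I. of_int (M i j) * w j) = x * w i"
proof -
  obtain q :: "int poly" where q: "poly (map_poly of_int q) x = 0" "lead_coeff q = 1"
    using assms unfolding algebraic_int_altdef_ipoly by blast
  define d where "d = degree q"
  have "d > 0"
  proof (rule ccontr)
    assume "\<not> d > 0"
    hence "q = 1" using q(2) unfolding d_def by (metis degree_0_id gr0I one_pCons)
    thus False using q(1) by simp
  qed
  define M :: "nat \<Rightarrow> nat \<Rightarrow> int" where
    "M = (\<lambda>i j. if Suc i < d then (if j = Suc i then 1 else 0) else - Polynomial.coeff q j)"
  have "(\<Sum>j<d. of_int (M i j) * x ^ j) = x * x ^ i" if i: "i < d" for i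
  proof (cases "Suc i < d")
    case True
    hence "(\<Sum>j<d. of_int (M i j) * x ^ j) = (\<Sum>j<d. if j = Suc i then x ^ j else 0)"
      unfolding M_def by (intro sum.cong) auto
    thus ?thesis using True by simp
  next
    case False
    hence d: "d = Suc i" using i by simp
    have "0 = (\<Sum>j\<le>d. of_int (Polynomial.coeff q j) * x ^ j)"
      using q(1) unfolding poly_altdef d_def by (simp add: degree_map_poly coeff_map_poly)
    also have "\<dots> = (\<Sum>j<d. of_int (Polynomial.coeff q j) * x ^ j) + x ^ d"
      using q(2) unfolding d_def by (simp add: lessThan_Suc_atMost[symmetric])
    finally have "x ^ d = - (\<Sum>j<d. of_int (Polynomial.coeff q j) * x ^ j)"
      by (simp add: eq_neg_iff_add_eq_0 add.commute)
    thus ?thesis using False d unfolding M_def by (simp add: sum_negf)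
  qed
  with \<open>d > 0\<close> show ?thesis
    by (intro that[of "{..<d}" 0 "\<lambda>i. x ^ i" M]) auto
qed

text \<open>
  If x and y are eigenvalues of integer matrices with eigenvectors v and w, then x + y is an
  eigenvalue of their Kronecker sum with eigenvector v \<otimes> w.
\<close>
lemma algebraic_int_add:
  fixes x y :: "'a :: field_char_0"
  assumes "algebraic_int x" "algebraic_int y"
  shows "algebraic_int (x + y)"
proof -
  obtain I1 :: "nat set" and i1 w1 M1 where 1: "finite I1" "i1 \<in> I1" "w1 i1 \<noteq> 0"
    "\<And>i. i \<in> I1 \<Longrightarrow> (\<Sum>j\<in>I1. of_int (M1 i j) * w1 j) = x * w1 i"
    by (rule algebraic_int_imp_int_eigenvalue[OF assms(1)]) blast
  obtain I2 :: "nat set" and i2 w2 M2 where 2: "finite I2" "i2 \<in> I2" "w2 i2 \<noteq> 0"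
    "\<And>i. i \<in> I2 \<Longrightarrow> (\<Sum>j\<in>I2. of_int (M2 i j) * w2 j) = y * w2 i"
    by (rule algebraic_int_imp_int_eigenvalue[OF assms(2)]) blast
  define M where "M = (\<lambda>(i, j) (k, l).
      (if j = l then M1 i k else 0) + (if i = k then M2 j l else 0))"
  define w where "w = (\<lambda>(k, l). w1 k * w2 l)"
  show ?thesis
  proof (rule algebraic_int_if_int_eigenvalue[of "I1 \<times> I2" "(i1, i2)" w M])
    show "finite (I1 \<times> I2)" "(i1, i2) \<in> I1 \<times> I2" "w (i1, i2) \<noteq> 0"
      using 1 2 unfolding w_def by simp_all
    fix ij assume "ij \<in> I1 \<times> I2"
    then obtain i j where ij: "ij = (i, j)" "i \<in> I1" "j \<in> I2" by blast
    have left: "(\<Sum>k\<in>I1. \<Sum>l\<in>I2. (if j = l then of_int (M1 i k) * (w1 k * w2 l) else 0))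
        = (\<Sum>k\<in>I1. of_int (M1 i k) * w1 k) * w2 j"
      using ij 2(1) by (simp add: sum.delta sum_distrib_right mult.assoc)
    have "(\<Sum>k\<in>I1. \<Sum>l\<in>I2. (if i = k then of_int (M2 j l) * (w1 k * w2 l) else 0))
        = (\<Sum>k\<in>I1. (if i = k then (\<Sum>l\<in>I2. of_int (M2 j l) * (w1 k * w2 l)) else 0))"
      by (intro sum.cong) auto
    also have "\<dots> = w1 i * (\<Sum>l\<in>I2. of_int (M2 j l) * w2 l)"
      using ij 1(1) by (simp add: sum.delta sum_distrib_left mult.left_commute)
    finally have right: "(\<Sum>k\<in>I1. \<Sum>l\<in>I2. (if i = k then of_int (M2 j l) * (w1 k * w2 l) else 0))
        = w1 i * (\<Sum>l\<in>I2. of_int (M2 j l) * w2 l)" .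
    have "(\<Sum>kl\<in>I1 \<times> I2. of_int (M ij kl) * w kl)
        = (\<Sum>k\<in>I1. \<Sum>l\<in>I2. (if j = l then of_int (M1 i k) * (w1 k * w2 l) else 0)
              + (if i = k then of_int (M2 j l) * (w1 k * w2 l) else 0))"
      unfolding sum.cartesian_product M_def w_def ij
      by (intro sum.cong) (auto simp: distrib_right)
    also have "\<dots> = (\<Sum>k\<in>I1. \<Sum>l\<in>I2. (if j = l then of_int (M1 i k) * (w1 k * w2 l) else 0))
        + (\<Sum>k\<in>I1. \<Sum>l\<in>I2. (if i = k then of_int (M2 j l) * (w1 k * w2 l) else 0))"
      by (simp add: sum.distrib)
    also have "\<dots> = (\<Sum>k\<in>I1. of_int (M1 i k) * w1 k) * w2 j
        + w1 i * (\<Sum>l\<in>I2. of_int (M2 j l) * w2 l)"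
      unfolding left right ..
    also have "\<dots> = (x + y) * w ij"
      using 1(4)[OF ij(2)] 2(4)[OF ij(3)] ij unfolding w_def by (simp add: algebra_simps)
    finally show "(\<Sum>kl\<in>I1 \<times> I2. of_int (M ij kl) * w kl) = (x + y) * w ij" .
  qed
qed

lemma algebraic_int_diff:
  fixes x y :: "'a :: field_char_0"
  shows "algebraic_int x \<Longrightarrow> algebraic_int y \<Longrightarrow> algebraic_int (x - y)"
  using algebraic_int_add[of x "- y"] by auto

lemma algebraic_int_sum_list:
  fixes xs :: "'a :: field_char_0 list"
  shows "(\<And>x. x \<in> set xs \<Longrightarrow> algebraic_int x) \<Longrightarrow> algebraic_int (sum_list xs)"
  by (induction xs) (auto intro: algebraic_int_add)

lemma algebraic_int_root_of_unity:
  fixes x :: "'a :: field_char_0"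
  assumes "m > 0" and "x ^ m = 1"
  shows "algebraic_int x"
  by (rule algebraic_int_root[of 1 "Polynomial.monom 1 m"])
     (use assms in \<open>auto simp: poly_monom degree_monom_eq coeff_monom\<close>)

section \<open>Traces and eigenvalues of complex matrices\<close>

lemma mat_trace_mult_comm:
  assumes A: "A \<in> carrier_mat n m" and B: "B \<in> carrier_mat m n"
  shows "mat_trace (A * B) = mat_trace (B * A)"
proof -
  have "mat_trace (A * B) = (\<Sum>i<n. \<Sum>k<m. A $$ (i, k) * B $$ (k, i))"
    unfolding mat_trace_def using A B
    by (auto simp: scalar_prod_def lessThan_atLeast0 intro!: sum.cong)
  also have "\<dots> = (\<Sum>k<m. \<Sum>i<n. B $$ (k, i) * A $$ (i, k))"
    by (subst sum.swap) (simp add: mult.commute)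
  also have "\<dots> = mat_trace (B * A)"
    unfolding mat_trace_def using A B
    by (auto simp: scalar_prod_def lessThan_atLeast0 intro!: sum.cong)
  finally show ?thesis .
qed

lemma mat_trace_similar:
  assumes "similar_mat_wit A B P Q"
  shows "mat_trace A = mat_trace B"
proof -
  define n where "n = dim_row A"
  have c: "B \<in> carrier_mat n n" "P \<in> carrier_mat n n" "Q \<in> carrier_mat n n"
    and QP: "Q * P = 1\<^sub>m n" and AB: "A = P * B * Q"
    using similar_mat_witD[OF n_def assms] by auto
  have "mat_trace A = mat_trace (P * (B * Q))" using AB assoc_mult_mat[OF c(2,1,3)] by simp
  also have "\<dots> = mat_trace ((B * Q) * P)" using c by (intro mat_trace_mult_comm) auto
  also have "(B * Q) * P = B" using c QP assoc_mult_mat[OF c(1,3,2)] by simp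
  finally show ?thesis .
qed

lemma mat_trace_smult_one [simp]: "mat_trace (e \<cdot>\<^sub>m 1\<^sub>m n) = of_nat n * e"
  unfolding mat_trace_def by simp

lemma complex_mat_has_eigenvalue:
  fixes A :: "complex mat"
  assumes A: "A \<in> carrier_mat n n" and "n > 0"
  obtains e where "eigenvalue A e"
proof -
  obtain es where es: "char_poly A = (\<Prod>a\<leftarrow>es. [:- a, 1:])" "length es = n"
    using char_poly_factorized[OF A] by blast
  have "poly (char_poly A) (es ! 0) = 0"
    using \<open>n > 0\<close> unfolding es(1) by (force simp: es(2) poly_prod_list prod_list_zero_iff)
  thus ?thesis using eigenvalue_root_char_poly[OF A] that by blast
qed

lemma eigenvalue_pow_eq_one:
  fixes A :: "'a :: field mat"
  assumes A: "A \<in> carrier_mat n n" and Am: "A ^\<^sub>m m = 1\<^sub>m n" and "eigenvalue A e"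
  shows "e ^ m = 1"
proof -
  obtain v where ev: "eigenvector A v e" using \<open>eigenvalue A e\<close> unfolding eigenvalue_def by blast
  have v: "v \<in> carrier_vec n" "v \<noteq> 0\<^sub>v n" using ev A unfolding eigenvector_def by auto
  then obtain i where i: "i < n" "v $ i \<noteq> 0" by (metis eq_vecI carrier_vecD index_zero_vec)
  have "v = e ^ m \<cdot>\<^sub>v v" using eigenvector_pow[OF A ev, of m] Am v by simp
  hence "v $ i = e ^ m * v $ i" using i v by (metis index_smult_vec(1) carrier_vecD)
  thus ?thesis using i by simp
qed

text \<open>The eigenvalues are roots of unity and the trace is their sum, the diagonal of a Schur decomposition.\<close>
lemma algebraic_int_mat_trace_finite_order:
  fixes A :: "complex mat"
  assumes A: "A \<in> carrier_mat n n" and m: "m > 0" and Am: "A ^\<^sub>m m = 1\<^sub>m n"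
  shows "algebraic_int (mat_trace A)"
proof -
  obtain es where es: "char_poly A = (\<Prod>a\<leftarrow>es. [:- a, 1:])"
    using char_poly_factorized[OF A] by blast
  obtain B P Q where BPQ: "schur_decomposition A es = (B, P, Q)"
    by (cases "schur_decomposition A es") auto
  have sim: "similar_mat_wit A B P Q" and diag: "diag_mat B = es"
    using schur_decomposition[OF A es BPQ] by auto
  have "sum_list es = mat_trace B"
    unfolding diag[symmetric] mat_trace_def diag_mat_def
    by (simp add: sum_list_sum_nth lessThan_atLeast0)
  hence "mat_trace A = sum_list es" using mat_trace_similar[OF sim] by simp
  moreover have "algebraic_int e" if "e \<in> set es" for e
  proof -
    have "poly (char_poly A) e = 0"
      unfolding es using that by (force simp: poly_prod_list prod_list_zero_iff)
    hence "e ^ m = 1" using eigenvalue_pow_eq_one[OF A Am] eigenvalue_root_char_poly[OF A] by simp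
    thus ?thesis using algebraic_int_root_of_unity[OF m] by blast
  qed
  ultimately show ?thesis by (simp add: algebraic_int_sum_list)
qed

section \<open>Ideals of algebraic integers\<close>

lemma alg_int_ideal_add: "alg_int_ideal P \<Longrightarrow> x \<in> P \<Longrightarrow> y \<in> P \<Longrightarrow> x + y \<in> P"
  unfolding alg_int_ideal_def by blast

lemma alg_int_ideal_mult: "alg_int_ideal P \<Longrightarrow> algebraic_int r \<Longrightarrow> x \<in> P \<Longrightarrow> r * x \<in> P"
  unfolding alg_int_ideal_def by blast

lemma alg_int_ideal_cancel_coprime:
  assumes P: "alg_int_ideal P" and p: "of_nat p \<in> P" and "coprime n p"
    and d: "algebraic_int d" and nd: "of_nat n * d \<in> P"
  shows "d \<in> P"
proof -
  obtain u v where "u * int n + v * int p = 1"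
    using bezout_int[of "int n" "int p"] \<open>coprime n p\<close> by (auto simp: coprime_iff_gcd_eq_1)
  hence "d = of_int u * (of_nat n * d) + of_int v * (d * of_nat p)"
    by (metis (mono_tags, opaque_lifting) distrib_right mult.assoc mult.commute mult.left_neutral
        of_int_1 of_int_add of_int_mult of_int_of_nat_eq)
  also have "\<dots> \<in> P"
    using alg_int_ideal_mult[OF P _ nd] alg_int_ideal_mult[OF P _ alg_int_ideal_mult[OF P d p]]
    by (intro alg_int_ideal_add[OF P]) auto
  finally show ?thesis .
qed

lemma alg_int_ideal_central_char_mult:
  fixes x y b :: complex
  assumes P: "alg_int_ideal P" and p: "of_nat p \<in> P" and cop: "coprime n p" and "n > 0" "b \<noteq> 0"
    and x: "algebraic_int x" and xy: "algebraic_int (of_nat k * (x * y) / (of_nat n * b))"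
    and cx: "of_nat k * x / of_nat n - of_nat k \<in> P" and cy: "of_nat k * y / b - of_nat k \<in> P"
  shows "of_nat k * (x * y) / (of_nat n * b) - of_nat k \<in> P"
proof (rule alg_int_ideal_cancel_coprime[OF P p cop])
  show "algebraic_int (of_nat k * (x * y) / (of_nat n * b) - of_nat k)"
    using xy by (simp add: algebraic_int_diff)
  have "x * (of_nat k * y / b - of_nat k) + of_nat n * (of_nat k * x / of_nat n - of_nat k) \<in> P"
    using P x cx cy by (intro alg_int_ideal_add alg_int_ideal_mult) auto
  also have "x * (of_nat k * y / b - of_nat k) + of_nat n * (of_nat k * x / of_nat n - of_nat k)
      = of_nat n * (of_nat k * (x * y) / (of_nat n * b) - of_nat k)"
    using \<open>n > 0\<close> \<open>b \<noteq> 0\<close> by (simp add: field_simps)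
  finally show "of_nat n * (of_nat k * (x * y) / (of_nat n * b) - of_nat k) \<in> P" .
qed

section \<open>Representations and Schur's lemma\<close>

lemma rep_carrier: "is_rep G n \<rho> \<Longrightarrow> g \<in> carrier G \<Longrightarrow> \<rho> g \<in> carrier_mat n n"
  unfolding is_rep_def by blast

lemma rep_mult:
  "is_rep G n \<rho> \<Longrightarrow> g \<in> carrier G \<Longrightarrow> h \<in> carrier G \<Longrightarrow> \<rho> (g \<otimes>\<^bsub>G\<^esub> h) = \<rho> g * \<rho> h"
  unfolding is_rep_def by blast

lemma rep_one: "is_rep G n \<rho> \<Longrightarrow> \<rho> \<one>\<^bsub>G\<^esub> = 1\<^sub>m n"
  unfolding is_rep_def by blast

lemma commuting_eigenspace_invariant:
  fixes S :: "complex mat"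
  assumes r: "is_rep G n \<rho>" and S: "S \<in> carrier_mat n n"
    and comm: "\<And>h. h \<in> carrier G \<Longrightarrow> S * \<rho> h = \<rho> h * S"
  shows "invariant_subspace G n \<rho> {u \<in> carrier_vec n. S *\<^sub>v u = e \<cdot>\<^sub>v u}"
    (is "invariant_subspace G n \<rho> ?W")
  unfolding invariant_subspace_def
proof (intro conjI ballI allI)
  show "?W \<subseteq> carrier_vec n" by blast
  show "0\<^sub>v n \<in> ?W" using S by (auto intro!: eq_vecI)
  fix u assume "u \<in> ?W"
  then have u: "u \<in> carrier_vec n" "S *\<^sub>v u = e \<cdot>\<^sub>v u" by auto
  show "v + u \<in> ?W" if "v \<in> ?W" for v
    using S u that by (auto simp: mult_add_distrib_mat_vec smult_add_distrib_vec)
  show "c \<cdot>\<^sub>v u \<in> ?W" for c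
    using S u by (simp add: mult_mat_vec smult_smult_assoc mult.commute)
  fix h assume h: "h \<in> carrier G"
  have \<rho>h: "\<rho> h \<in> carrier_mat n n" using rep_carrier[OF r h] .
  have "S *\<^sub>v (\<rho> h *\<^sub>v u) = (S * \<rho> h) *\<^sub>v u" using S \<rho>h u by simp
  also have "\<dots> = \<rho> h *\<^sub>v (S *\<^sub>v u)" using S \<rho>h u comm[OF h] by simp
  also have "\<dots> = e \<cdot>\<^sub>v (\<rho> h *\<^sub>v u)" using \<rho>h u by (simp add: mult_mat_vec)
  finally show "\<rho> h *\<^sub>v u \<in> ?W" using \<rho>h u by simp
qed

lemma schur_lemma:
  fixes S :: "complex mat"
  assumes irr: "irreducible_rep G n \<rho>" and S: "S \<in> carrier_mat n n"
    and comm: "\<And>h. h \<in> carrier G \<Longrightarrow> S * \<rho> h = \<rho> h * S"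
  obtains e where "S = e \<cdot>\<^sub>m 1\<^sub>m n"
proof -
  have r: "is_rep G n \<rho>" and n: "n > 0" using irr unfolding irreducible_rep_def by auto
  obtain e where "eigenvalue S e" using complex_mat_has_eigenvalue[OF S n] .
  then obtain v where v: "v \<in> carrier_vec n" "v \<noteq> 0\<^sub>v n" "S *\<^sub>v v = e \<cdot>\<^sub>v v"
    using S unfolding eigenvalue_def eigenvector_def by auto
  define W where "W = {u \<in> carrier_vec n. S *\<^sub>v u = e \<cdot>\<^sub>v u}"
  have "invariant_subspace G n \<rho> W"
    unfolding W_def by (rule commuting_eigenspace_invariant[OF r S comm])
  hence "W = {0\<^sub>v n} \<or> W = carrier_vec n"
    using irr unfolding irreducible_rep_def by (elim conjE allE impE)
  moreover have "v \<in> W" using v unfolding W_def by simp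
  ultimately have W: "W = carrier_vec n" using v(2) by blast
  have "S = e \<cdot>\<^sub>m 1\<^sub>m n"
  proof (rule eq_matI)
    fix i j assume "i < dim_row (e \<cdot>\<^sub>m 1\<^sub>m n)" "j < dim_col (e \<cdot>\<^sub>m 1\<^sub>m n)"
    hence ij: "i < n" "j < n" by simp_all
    have "unit_vec n j \<in> W" using W by simp
    hence "S *\<^sub>v unit_vec n j = e \<cdot>\<^sub>v unit_vec n j" unfolding W_def by simp
    hence "(S *\<^sub>v unit_vec n j) $ i = (e \<cdot>\<^sub>v unit_vec n j) $ i" by simp
    thus "S $$ (i, j) = (e \<cdot>\<^sub>m 1\<^sub>m n) $$ (i, j)" using S ij by simp
  qed (use S in simp_all)
  thus ?thesis using that by blast
qed

context group
begin

lemma irr_char_one: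
  assumes "irr_char G \<chi>"
  obtains n where "n > 0" "\<chi> \<one> = of_nat n"
proof -
  obtain n \<rho> where irr: "irreducible_rep G n \<rho>" and \<chi>: "\<forall>g\<in>carrier G. \<chi> g = mat_trace (\<rho> g)"
    using assms unfolding irr_char_def by blast
  have "\<rho> \<one> = 1\<^sub>m n" "n > 0" using irr rep_one unfolding irreducible_rep_def by auto
  hence "\<chi> \<one> = of_nat n" using \<chi> unfolding mat_trace_def by simp
  thus ?thesis using \<open>n > 0\<close> that by blast
qed

lemma rep_pow:
  assumes r: "is_rep G n \<rho>" and g: "g \<in> carrier G"
  shows "\<rho> (g [^] (k::nat)) = \<rho> g ^\<^sub>m k"
  by (induction k) (use rep_one[OF r] rep_carrier[OF r g] rep_mult[OF r _ g] g in auto)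

lemma rep_trace_algebraic_int:
  assumes r: "is_rep G n \<rho>" and g: "g \<in> carrier G" and fin: "finite (carrier G)"
  shows "algebraic_int (mat_trace (\<rho> g))"
proof (rule algebraic_int_mat_trace_finite_order[OF rep_carrier[OF r g]])
  show "order G > 0" using fin unfolding order_def by (auto simp: card_gt_0_iff)
  show "\<rho> g ^\<^sub>m order G = 1\<^sub>m n"
    using rep_pow[OF r g, of "order G"] pow_order_eq_1[OF g] rep_one[OF r] by simp
qed

lemma rep_trace_conj:
  assumes r: "is_rep G n \<rho>" and g: "g \<in> carrier G" and x: "x \<in> carrier G"
  shows "mat_trace (\<rho> (x \<otimes> g \<otimes> inv x)) = mat_trace (\<rho> g)"
proof -
  have c: "\<rho> x \<in> carrier_mat n n" "\<rho> g \<in> carrier_mat n n" "\<rho> (inv x) \<in> carrier_mat n n"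
    using rep_carrier[OF r] g x by auto
  have "mat_trace (\<rho> (x \<otimes> g \<otimes> inv x)) = mat_trace (\<rho> x * (\<rho> g * \<rho> (inv x)))"
    using rep_mult[OF r] g x assoc_mult_mat[OF c] by simp
  also have "\<dots> = mat_trace ((\<rho> g * \<rho> (inv x)) * \<rho> x)"
    using c by (intro mat_trace_mult_comm) auto
  also have "(\<rho> g * \<rho> (inv x)) * \<rho> x = \<rho> g * (\<rho> (inv x) * \<rho> x)"
    using assoc_mult_mat[OF c(2,3,1)] .
  also have "\<rho> (inv x) * \<rho> x = 1\<^sub>m n"
    using rep_mult[OF r, of "inv x" x] rep_one[OF r] x by simp
  finally show ?thesis using c by simp
qed

lemma conj_class_subset: "g \<in> carrier G \<Longrightarrow> conj_class G g \<subseteq> carrier G"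
  unfolding conj_class_def by auto

lemma conj_class_conj:
  assumes g: "g \<in> carrier G" and h: "h \<in> carrier G" and x: "x \<in> conj_class G g"
  shows "h \<otimes> x \<otimes> inv h \<in> conj_class G g"
proof -
  obtain y where y: "y \<in> carrier G" "x = y \<otimes> g \<otimes> inv y" using x unfolding conj_class_def by auto
  have "h \<otimes> x \<otimes> inv h = (h \<otimes> y) \<otimes> g \<otimes> inv (h \<otimes> y)"
    using y g h by (simp add: m_assoc inv_mult_group)
  thus ?thesis using y h unfolding conj_class_def by blast
qed

lemma bij_betw_conj_class:
  assumes g: "g \<in> carrier G" and h: "h \<in> carrier G"
  shows "bij_betw (\<lambda>x. h \<otimes> x \<otimes> inv h) (conj_class G g) (conj_class G g)"
proof (rule bij_betw_imageI)
  show "inj_on (\<lambda>x. h \<otimes> x \<otimes> inv h) (conj_class G g)"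
  proof (rule inj_onI)
    fix x y assume "x \<in> conj_class G g" "y \<in> conj_class G g" "h \<otimes> x \<otimes> inv h = h \<otimes> y \<otimes> inv h"
    moreover have "x \<in> carrier G" "y \<in> carrier G" using calculation conj_class_subset[OF g] by auto
    ultimately show "x = y" using h by simp
  qed
  show "(\<lambda>x. h \<otimes> x \<otimes> inv h) ` conj_class G g = conj_class G g"
  proof (intro equalityI image_subsetI subsetI)
    fix x assume x: "x \<in> conj_class G g"
    hence "x \<in> carrier G" using conj_class_subset[OF g] by auto
    hence "x = h \<otimes> (inv h \<otimes> x \<otimes> inv (inv h)) \<otimes> inv h"
      using h by (simp add: m_assoc[symmetric], simp add: m_assoc)
    moreover have "inv h \<otimes> x \<otimes> inv (inv h) \<in> conj_class G g"
      using conj_class_conj[OF g inv_closed[OF h] x] h by simp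
    ultimately show "x \<in> (\<lambda>x. h \<otimes> x \<otimes> inv h) ` conj_class G g" by blast
  qed (use conj_class_conj[OF g h] in blast)
qed

lemma bij_betw_inv_mult:
  assumes K: "K \<subseteq> carrier G" and x: "x \<in> carrier G"
  shows "bij_betw (\<lambda>z. inv z \<otimes> x) K {y \<in> carrier G. x \<otimes> inv y \<in> K}"
proof (rule bij_betw_imageI)
  show "inj_on (\<lambda>z. inv z \<otimes> x) K"
  proof (rule inj_onI)
    fix y z assume "y \<in> K" "z \<in> K" "inv y \<otimes> x = inv z \<otimes> x"
    moreover have "y \<in> carrier G" "z \<in> carrier G" using calculation K by auto
    ultimately have "inv y = inv z" using x by simp
    thus "y = z" using \<open>y \<in> carrier G\<close> \<open>z \<in> carrier G\<close> by (metis inv_inv)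
  qed
  show "(\<lambda>z. inv z \<otimes> x) ` K = {y \<in> carrier G. x \<otimes> inv y \<in> K}"
  proof (intro equalityI image_subsetI subsetI)
    fix y assume y: "y \<in> {y \<in> carrier G. x \<otimes> inv y \<in> K}"
    hence "y = inv (x \<otimes> inv y) \<otimes> x" using x by (simp add: inv_mult_group m_assoc)
    thus "y \<in> (\<lambda>z. inv z \<otimes> x) ` K" using y by blast
  qed (use K x in \<open>auto simp: inv_mult_group m_assoc[symmetric]\<close>)
qed

end

section \<open>Class sums and central characters\<close>

definition class_sum_mat :: "('a, 'b) monoid_scheme \<Rightarrow> nat \<Rightarrow> ('a \<Rightarrow> complex mat) \<Rightarrow> 'a \<Rightarrow> complex mat"
  where "class_sum_mat G n \<rho> g = mat n n (\<lambda>(i, j). \<Sum>x\<in>conj_class G g. \<rho> x $$ (i, j))"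

lemma class_sum_mat_carrier [simp]: "class_sum_mat G n \<rho> g \<in> carrier_mat n n"
  unfolding class_sum_mat_def by simp

context group
begin

lemma index_class_sum_mat_mult:
  assumes r: "is_rep G n \<rho>" and g: "g \<in> carrier G" and A: "A \<in> carrier_mat n n"
    and ij: "i < n" "j < n"
  shows "(class_sum_mat G n \<rho> g * A) $$ (i, j) = (\<Sum>x\<in>conj_class G g. (\<rho> x * A) $$ (i, j))"
proof -
  have "(class_sum_mat G n \<rho> g * A) $$ (i, j)
      = (\<Sum>l<n. (\<Sum>x\<in>conj_class G g. \<rho> x $$ (i, l)) * A $$ (l, j))"
    using A ij by (simp add: class_sum_mat_def scalar_prod_def lessThan_atLeast0)
  also have "\<dots> = (\<Sum>x\<in>conj_class G g. \<Sum>l<n. \<rho> x $$ (i, l) * A $$ (l, j))"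
    by (simp add: sum_distrib_right sum.swap[of _ "conj_class G g"])
  also have "\<dots> = (\<Sum>x\<in>conj_class G g. (\<rho> x * A) $$ (i, j))"
  proof (rule sum.cong[OF refl])
    fix x assume "x \<in> conj_class G g"
    hence "\<rho> x \<in> carrier_mat n n" using rep_carrier[OF r] conj_class_subset[OF g] by blast
    thus "(\<Sum>l<n. \<rho> x $$ (i, l) * A $$ (l, j)) = (\<rho> x * A) $$ (i, j)"
      using A ij by (simp add: scalar_prod_def lessThan_atLeast0)
  qed
  finally show ?thesis .
qed

lemma index_mult_class_sum_mat:
  assumes r: "is_rep G n \<rho>" and g: "g \<in> carrier G" and A: "A \<in> carrier_mat n n"
    and ij: "i < n" "j < n"
  shows "(A * class_sum_mat G n \<rho> g) $$ (i, j) = (\<Sum>x\<in>conj_class G g. (A * \<rho> x) $$ (i, j))"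
proof -
  have "(A * class_sum_mat G n \<rho> g) $$ (i, j)
      = (\<Sum>l<n. A $$ (i, l) * (\<Sum>x\<in>conj_class G g. \<rho> x $$ (l, j)))"
    using A ij by (simp add: class_sum_mat_def scalar_prod_def lessThan_atLeast0)
  also have "\<dots> = (\<Sum>x\<in>conj_class G g. \<Sum>l<n. A $$ (i, l) * \<rho> x $$ (l, j))"
    by (simp add: sum_distrib_left sum.swap[of _ "conj_class G g"])
  also have "\<dots> = (\<Sum>x\<in>conj_class G g. (A * \<rho> x) $$ (i, j))"
  proof (rule sum.cong[OF refl])
    fix x assume "x \<in> conj_class G g"
    hence "\<rho> x \<in> carrier_mat n n" using rep_carrier[OF r] conj_class_subset[OF g] by blast
    thus "(\<Sum>l<n. A $$ (i, l) * \<rho> x $$ (l, j)) = (A * \<rho> x) $$ (i, j)"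
      using A ij by (simp add: scalar_prod_def lessThan_atLeast0)
  qed
  finally show ?thesis .
qed

lemma class_sum_mat_commutes:
  assumes r: "is_rep G n \<rho>" and g: "g \<in> carrier G" and h: "h \<in> carrier G"
  shows "class_sum_mat G n \<rho> g * \<rho> h = \<rho> h * class_sum_mat G n \<rho> g"
proof (rule eq_matI)
  fix i j assume "i < dim_row (\<rho> h * class_sum_mat G n \<rho> g)" "j < dim_col (\<rho> h * class_sum_mat G n \<rho> g)"
  hence ij: "i < n" "j < n" using rep_carrier[OF r h] by (simp_all add: class_sum_mat_def)
  note K = conj_class_subset[OF g]
  have "(class_sum_mat G n \<rho> g * \<rho> h) $$ (i, j) = (\<Sum>x\<in>conj_class G g. (\<rho> x * \<rho> h) $$ (i, j))"
    by (rule index_class_sum_mat_mult[OF r g rep_carrier[OF r h] ij])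
  also have "\<dots> = (\<Sum>x\<in>conj_class G g. \<rho> (x \<otimes> h) $$ (i, j))"
    using K h by (intro sum.cong) (auto simp: rep_mult[OF r])
  also have "\<dots> = (\<Sum>x\<in>conj_class G g. \<rho> (h \<otimes> x \<otimes> inv h \<otimes> h) $$ (i, j))"
    by (rule sum.reindex_bij_betw[OF bij_betw_conj_class[OF g h],
          where g = "\<lambda>x. \<rho> (x \<otimes> h) $$ (i, j)", symmetric])
  also have "\<dots> = (\<Sum>x\<in>conj_class G g. \<rho> (h \<otimes> x) $$ (i, j))"
    using K h by (intro sum.cong) (auto simp: m_assoc)
  also have "\<dots> = (\<Sum>x\<in>conj_class G g. (\<rho> h * \<rho> x) $$ (i, j))"
    using K h by (intro sum.cong) (auto simp: rep_mult[OF r])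
  also have "\<dots> = (\<rho> h * class_sum_mat G n \<rho> g) $$ (i, j)"
    by (rule index_mult_class_sum_mat[OF r g rep_carrier[OF r h] ij, symmetric])
  finally show "(class_sum_mat G n \<rho> g * \<rho> h) $$ (i, j) = (\<rho> h * class_sum_mat G n \<rho> g) $$ (i, j)" .
qed (use rep_carrier[OF r h] in \<open>simp_all add: class_sum_mat_def\<close>)

lemma mat_trace_class_sum_mat:
  assumes r: "is_rep G n \<rho>" and g: "g \<in> carrier G"
  shows "mat_trace (class_sum_mat G n \<rho> g) = of_nat (card (conj_class G g)) * mat_trace (\<rho> g)"
proof -
  have "mat_trace (class_sum_mat G n \<rho> g) = (\<Sum>i<n. \<Sum>x\<in>conj_class G g. \<rho> x $$ (i, i))"
    unfolding mat_trace_def class_sum_mat_def by simp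
  also have "\<dots> = (\<Sum>x\<in>conj_class G g. mat_trace (\<rho> x))"
    using rep_carrier[OF r] conj_class_subset[OF g]
    unfolding mat_trace_def by (subst sum.swap) (auto intro!: sum.cong)
  also have "\<dots> = (\<Sum>x\<in>conj_class G g. mat_trace (\<rho> g))"
    using rep_trace_conj[OF r g] by (intro sum.cong) (auto simp: conj_class_def)
  finally show ?thesis by simp
qed

text \<open>
  A scalar class sum e acts on the function w(y) = \<rho>(y\<inverse>)(0,0) through the integer matrix
  M(x,y) = [x y\<inverse> \<in> K], so e is an eigenvalue of an integer matrix.
\<close>
lemma algebraic_int_class_sum_scalar:
  assumes fin: "finite (carrier G)" and r: "is_rep G n \<rho>" and n: "n > 0"
    and g: "g \<in> carrier G" and S: "class_sum_mat G n \<rho> g = e \<cdot>\<^sub>m 1\<^sub>m n"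
  shows "algebraic_int e"
proof (rule algebraic_int_if_int_eigenvalue[OF fin one_closed])
  define K where "K = conj_class G g"
  define w where "w = (\<lambda>y. \<rho> (inv y) $$ (0, 0))"
  show "w \<one> \<noteq> 0" unfolding w_def using rep_one[OF r] n by simp
  fix x assume x: "x \<in> carrier G"
  have K: "K \<subseteq> carrier G" using conj_class_subset[OF g] unfolding K_def .
  have "(\<Sum>y\<in>carrier G. of_int (if x \<otimes> inv y \<in> K then 1 else 0) * w y)
      = (\<Sum>y\<in>carrier G. if x \<otimes> inv y \<in> K then w y else 0)"
    by (intro sum.cong) auto
  also have "\<dots> = (\<Sum>y\<in>{y \<in> carrier G. x \<otimes> inv y \<in> K}. w y)"
    using fin by (simp add: sum.inter_filter)
  also have "\<dots> = (\<Sum>z\<in>K. w (inv z \<otimes> x))"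
    by (rule sum.reindex_bij_betw[OF bij_betw_inv_mult[OF K x], where g = w, symmetric])
  also have "\<dots> = (\<Sum>z\<in>K. (\<rho> (inv x) * \<rho> z) $$ (0, 0))"
    using K x by (intro sum.cong) (auto simp: w_def inv_mult_group rep_mult[OF r])
  also have "\<dots> = (\<rho> (inv x) * class_sum_mat G n \<rho> g) $$ (0, 0)"
    using index_mult_class_sum_mat[OF r g rep_carrier[OF r inv_closed[OF x]] n n]
    unfolding K_def by simp
  also have "\<dots> = e * w x"
    using rep_carrier[OF r inv_closed[OF x]] n unfolding S w_def by simp
  finally show "(\<Sum>y\<in>carrier G. of_int (if x \<otimes> inv y \<in> K then 1 else 0) * w y) = e * w x" .
qed

lemma central_char_algebraic_int:
  assumes fin: "finite (carrier G)" and irr: "irreducible_rep G n \<rho>" and g: "g \<in> carrier G"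
  shows "algebraic_int (of_nat (card (conj_class G g)) * mat_trace (\<rho> g) / of_nat n)"
proof -
  have r: "is_rep G n \<rho>" and n: "n > 0" using irr unfolding irreducible_rep_def by auto
  obtain e where e: "class_sum_mat G n \<rho> g = e \<cdot>\<^sub>m 1\<^sub>m n"
    using schur_lemma[OF irr class_sum_mat_carrier class_sum_mat_commutes[OF r g]]
    by blast
  have "of_nat (card (conj_class G g)) * mat_trace (\<rho> g) / of_nat n = e"
    using arg_cong[OF e, of mat_trace] mat_trace_class_sum_mat[OF r g] n by simp
  thus ?thesis using algebraic_int_class_sum_scalar[OF fin r n g e] by simp
qed

lemma irr_char_algebraic_int:
  assumes "finite (carrier G)" and "irr_char G \<chi>" and g: "g \<in> carrier G"
  shows "algebraic_int (\<chi> g)"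
  using assms rep_trace_algebraic_int unfolding irr_char_def irreducible_rep_def by metis

lemma irr_char_central_char_algebraic_int:
  assumes fin: "finite (carrier G)" and \<chi>: "irr_char G \<chi>" and g: "g \<in> carrier G"
  shows "algebraic_int (of_nat (card (conj_class G g)) * \<chi> g / \<chi> \<one>)"
proof -
  obtain n \<rho> where irr: "irreducible_rep G n \<rho>" and "\<forall>g\<in>carrier G. \<chi> g = mat_trace (\<rho> g)"
    using \<chi> unfolding irr_char_def by blast
  moreover have "\<rho> \<one> = 1\<^sub>m n" using irr rep_one unfolding irreducible_rep_def by blast
  ultimately show ?thesis
    using central_char_algebraic_int[OF fin irr g] g by (simp add: mat_trace_def)
qed

end

theorem lemma2p3:
  fixes G :: "('a, 'b) monoid_scheme" and p :: nat and P :: "complex set"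
    and \<chi> \<psi> :: "'a \<Rightarrow> complex"
  assumes "group G" and "finite (carrier G)" and "prime p"
    and "max_ideal_over p P"
    and "in_principal_block G P \<chi>" and "in_principal_block G P \<psi>"
    and "\<chi> \<one>\<^bsub>G\<^esub> / of_nat p \<notin> \<int>"
    and "irr_char G (\<lambda>g. \<chi> g * \<psi> g)"
  shows "in_principal_block G P (\<lambda>g. \<chi> g * \<psi> g)"
proof -
  interpret group G by fact
  have P: "alg_int_ideal P" "of_nat p \<in> P" using assms(4) unfolding max_ideal_over_def by auto
  have \<chi>: "irr_char G \<chi>" and \<psi>: "irr_char G \<psi>" using assms(5,6) unfolding in_principal_block_def by auto
  obtain n where n: "n > 0" "\<chi> \<one>\<^bsub>G\<^esub> = of_nat n" using irr_char_one[OF \<chi>] .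
  obtain m where m: "m > 0" "\<psi> \<one>\<^bsub>G\<^esub> = of_nat m" using irr_char_one[OF \<psi>] .
  have "\<not> p dvd n"
  proof
    assume "p dvd n"
    hence "\<chi> \<one>\<^bsub>G\<^esub> / of_nat p \<in> \<int>" using n(2) prime_gt_0_nat[OF assms(3)] by (auto elim!: dvdE)
    thus False using assms(7) by contradiction
  qed
  hence cop: "coprime n p" using prime_imp_coprime[OF assms(3)] by (simp add: coprime_commute)
  show ?thesis unfolding in_principal_block_def
  proof (intro conjI ballI)
    fix g assume g: "g \<in> carrier G"
    define k where "k = card (conj_class G g)"
    have "of_nat k * \<chi> g / of_nat n - of_nat k \<in> P"
      and "of_nat k * \<psi> g / \<psi> \<one>\<^bsub>G\<^esub> - of_nat k \<in> P"
      using assms(5,6) g n(2) unfolding in_principal_block_def k_def by auto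
    moreover have "algebraic_int (of_nat k * (\<chi> g * \<psi> g) / (of_nat n * \<psi> \<one>\<^bsub>G\<^esub>))"
      using irr_char_central_char_algebraic_int[OF assms(2,8) g] n(2) unfolding k_def by simp
    ultimately show "of_nat (card (conj_class G g)) * (\<chi> g * \<psi> g) / (\<chi> \<one>\<^bsub>G\<^esub> * \<psi> \<one>\<^bsub>G\<^esub>)
        - of_nat (card (conj_class G g)) \<in> P"
      unfolding n(2) k_def[symmetric] using m(2) \<open>m > 0\<close>
      by (intro alg_int_ideal_central_char_mult[OF P cop n(1) _ irr_char_algebraic_int[OF assms(2) \<chi> g]])
        auto
  qed (rule assms(8))
qed

end
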